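(* Let $K\ge L\ge 1$ and $T\ge 1$ be integers, let $\mathbb{F}_p$ be a finite field, $q$ a positive integer, $\omega\in\mathbb{F}_p$ a primitive $q$-th root of unity (so $q\mid p-1$), and consider the polynomial-code PDMM scheme with degree vectors of $\mathrm{GASP}_{\mathrm{small}}$ (resp. $\mathrm{GASP}_{\mathrm{big}}$), $N$ workers where $N$ is the number of distinct integers in its degree table, and evaluation points $\rho_n=\omega^{n-1}$, $n=1,\dots,N$. If $q$ is larger than the largest entry of the degree table and $q$ is coprime to $K$, then the $\mathrm{GASP}_{\mathrm{small}}$ scheme is decodable and $T$-private. For $\mathrm{GASP}_{\mathrm{big}}$, the condition that $q$ is larger than the largest entry of the degree table (together with $\omega$ being a primitive $q$-th root of unity) suffices for the scheme to be decodable and $T$-private.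
   Context: Generalized arithmetic progression: $\mathrm{GAP}(\ell,x,r)\in\mathbb{Z}^\ell$ is the vector consisting of the first $\ell$ terms of $(0,1,\dots,r-1,\;x,x+1,\dots,x+r-1,\;2x,2x+1,\dots,2x+r-1,\dots)$. For $1\le r\le\min(K,T)$, $\mathrm{GASP}_r(K,L,T)$ is given by integer degree vectors $\boldsymbol{\alpha}^{(p)}=(0,1,\dots,K-1)$, $\boldsymbol{\alpha}^{(s)}=KL+\mathrm{GAP}(T,K,r)$, $\boldsymbol{\beta}^{(p)}=K\cdot(0,1,\dots,L-1)$, $\boldsymbol{\beta}^{(s)}=KL+(0,1,\dots,T-1)$ (adding a scalar to a vector adds it to each entry). $\mathrm{GASP}_{\mathrm{small}}$ is the case $r=1$ and $\mathrm{GASP}_{\mathrm{big}}$ the case $r=\min(K,T)$. The degree table is the set of all sums $a+b$ with $a$ an entry of $\boldsymbol{\alpha}^{(p)}$ or $\boldsymbol{\alpha}^{(s)}$ and $b$ an entry of $\boldsymbol{\beta}^{(p)}$ or $\boldsymbol{\beta}^{(s)}$. The scheme: $\mathbf A\in\mathbb{F}_p^{r_A\times c_A}$, $\mathbf B\in\mathbb{F}_p^{c_A\times c_B}$ with arbitrary joint distribution, $K\mid r_A$, $L\mid c_B$; $\mathbf A=(\mathbf A_1^T\cdots\mathbf A_K^T)^T$, $\mathbf B=(\mathbf B_1\cdots\mathbf B_L)$ split into equal blocks. Random $\mathbf R_1,\dots,\mathbf R_T$ (size of $\mathbf A_i$) and $\mathbf S_1,\dots,\mathbf S_T$ (size of $\mathbf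 B_j$) are i.i.d. uniform and independent of $(\mathbf A,\mathbf B)$. $\mathbf F(x)=\sum_i\mathbf A_ix^{\alpha^{(p)}_i}+\sum_i\mathbf R_ix^{\alpha^{(s)}_i}$, $\mathbf G(x)=\sum_j\mathbf B_jx^{\beta^{(p)}_j}+\sum_j\mathbf S_jx^{\beta^{(s)}_j}$; worker $n$ receives $\mathbf F(\rho_n),\mathbf G(\rho_n)$ and returns $\mathbf F(\rho_n)\mathbf G(\rho_n)$. $T$-private: for every set of $T$ workers, the mutual information between $(\mathbf A,\mathbf B)$ and their received data is zero. Decodable: the main node can compute all $\mathbf A_i\mathbf B_j$ from the $N$ returned products. *)

theory Defs
  imports "HOL-Probability.Probability" "Jordan_Normal_Form.Matrix"
begin

text \<open>GAP(l,x,r) is the vector of the first l terms of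
  0,1,...,r-1, x,x+1,...,x+r-1, 2x,...; its i-th entry (0-based, i < l) is
  (i div r) * x + i mod r.\<close>
definition GAP :: "nat \<Rightarrow> nat \<Rightarrow> nat \<Rightarrow> nat \<Rightarrow> nat" where
  "GAP l x r i = (i div r) * x + i mod r"

text \<open>Degree vectors of GASP_r(K,L,T), as 0-based index functions
  (alpha_p has length K, alpha_s length T, beta_p length L, beta_s length T).\<close>
definition gasp_alpha_p :: "nat \<Rightarrow> nat \<Rightarrow> nat \<Rightarrow> nat \<Rightarrow> nat \<Rightarrow> nat" where
  "gasp_alpha_p r K L T i = i"
definition gasp_alpha_s :: "nat \<Rightarrow> nat \<Rightarrow> nat \<Rightarrow> nat \<Rightarrow> nat \<Rightarrow> nat" where
  "gasp_alpha_s r K L T i = K * L + GAP T K r i"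
definition gasp_beta_p :: "nat \<Rightarrow> nat \<Rightarrow> nat \<Rightarrow> nat \<Rightarrow> nat \<Rightarrow> nat" where
  "gasp_beta_p r K L T j = K * j"
definition gasp_beta_s :: "nat \<Rightarrow> nat \<Rightarrow> nat \<Rightarrow> nat \<Rightarrow> nat \<Rightarrow> nat" where
  "gasp_beta_s r K L T j = K * L + j"

definition degree_table ::
  "nat \<Rightarrow> nat \<Rightarrow> nat \<Rightarrow> (nat \<Rightarrow> nat) \<Rightarrow> (nat \<Rightarrow> nat) \<Rightarrow> (nat \<Rightarrow> nat) \<Rightarrow> (nat \<Rightarrow> nat) \<Rightarrow> nat set" where
  "degree_table K L T ap as bp bs =
     {a + b | a b. (a \<in> ap ` {..<K} \<union> as ` {..<T}) \<and> (b \<in> bp ` {..<L} \<union> bs ` {..<T})}"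

definition gasp_table :: "nat \<Rightarrow> nat \<Rightarrow> nat \<Rightarrow> nat \<Rightarrow> nat set" where
  "gasp_table r K L T = degree_table K L T (gasp_alpha_p r K L T) (gasp_alpha_s r K L T)
                           (gasp_beta_p r K L T) (gasp_beta_s r K L T)"

definition primitive_root_of_unity :: "nat \<Rightarrow> 'a::field \<Rightarrow> bool" where
  "primitive_root_of_unity q w \<longleftrightarrow> 0 < q \<and> w ^ q = 1 \<and> (\<forall>k. 0 < k \<and> k < q \<longrightarrow> w ^ k \<noteq> 1)"

definition blockA :: "nat \<Rightarrow> 'a mat \<Rightarrow> nat \<Rightarrow> 'a mat" where
  "blockA K A i = mat (dim_row A div K) (dim_col A) (\<lambda>(a, b). A $$ (i * (dim_row A div K) + a, b))"

definition blockB :: "nat \<Rightarrow> 'a mat \<Rightarrow> nat \<Rightarrow> 'a mat" where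
  "blockB L B j = mat (dim_row B) (dim_col B div L) (\<lambda>(a, b). B $$ (a, j * (dim_col B div L) + b))"

definition encF :: "nat \<Rightarrow> nat \<Rightarrow> (nat \<Rightarrow> nat) \<Rightarrow> (nat \<Rightarrow> nat) \<Rightarrow> 'a::comm_ring_1 mat
                     \<Rightarrow> 'a mat list \<Rightarrow> 'a \<Rightarrow> 'a mat" where
  "encF K T ap as A Rs x = mat (dim_row A div K) (dim_col A) (\<lambda>(a, b).
      (\<Sum>i<K. blockA K A i $$ (a, b) * x ^ ap i) + (\<Sum>i<T. (Rs ! i) $$ (a, b) * x ^ as i))"

definition encG :: "nat \<Rightarrow> nat \<Rightarrow> (nat \<Rightarrow> nat) \<Rightarrow> (nat \<Rightarrow> nat) \<Rightarrow> 'a::comm_ring_1 mat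
                     \<Rightarrow> 'a mat list \<Rightarrow> 'a \<Rightarrow> 'a mat" where
  "encG L T bp bs B Ss x = mat (dim_row B) (dim_col B div L) (\<lambda>(a, b).
      (\<Sum>j<L. blockB L B j $$ (a, b) * x ^ bp j) + (\<Sum>j<T. (Ss ! j) $$ (a, b) * x ^ bs j))"

text \<open>Lists of T random matrices of a given size; the uniform distribution on this set
  is the same as T i.i.d. uniform matrices.\<close>
definition mat_lists :: "nat \<Rightarrow> nat \<Rightarrow> nat \<Rightarrow> 'a mat list set" where
  "mat_lists T m n = {xs. length xs = T \<and> set xs \<subseteq> carrier_mat m n}"

definition decodable ::
  "nat \<Rightarrow> nat \<Rightarrow> nat \<Rightarrow> (nat \<Rightarrow> nat) \<Rightarrow> (nat \<Rightarrow> nat) \<Rightarrow> (nat \<Rightarrow> nat) \<Rightarrow> (nat \<Rightarrow> nat)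
   \<Rightarrow> nat \<Rightarrow> nat \<Rightarrow> nat \<Rightarrow> nat \<Rightarrow> (nat \<Rightarrow> 'a::comm_ring_1) \<Rightarrow> bool" where
  "decodable K L T ap as bp bs rA cA cB N rho \<longleftrightarrow>
     (\<exists>dec :: 'a mat list \<Rightarrow> nat \<Rightarrow> nat \<Rightarrow> 'a mat.
        \<forall>A \<in> carrier_mat rA cA. \<forall>B \<in> carrier_mat cA cB.
        \<forall>Rs \<in> mat_lists T (rA div K) cA. \<forall>Ss \<in> mat_lists T cA (cB div L).
        \<forall>i<K. \<forall>j<L.
          dec (map (\<lambda>n. encF K T ap as A Rs (rho n) * encG L T bp bs B Ss (rho n)) [1..<N+1]) i j
            = blockA K A i * blockB L B j)"

text \<open>The sample space is ((A,B),Rs,Ss), with Rs, Ss uniform and independent of (A,B).\<close>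
definition t_private ::
  "nat \<Rightarrow> nat \<Rightarrow> nat \<Rightarrow> (nat \<Rightarrow> nat) \<Rightarrow> (nat \<Rightarrow> nat) \<Rightarrow> (nat \<Rightarrow> nat) \<Rightarrow> (nat \<Rightarrow> nat)
   \<Rightarrow> nat \<Rightarrow> nat \<Rightarrow> nat \<Rightarrow> nat \<Rightarrow> (nat \<Rightarrow> 'a::{comm_ring_1,finite}) \<Rightarrow> bool" where
  "t_private K L T ap as bp bs rA cA cB N rho \<longleftrightarrow>
     (\<forall>(\<mu> :: ('a mat \<times> 'a mat) pmf) W.
        set_pmf \<mu> \<subseteq> carrier_mat rA cA \<times> carrier_mat cA cB \<longrightarrow>
        W \<subseteq> {1..N} \<longrightarrow> card W = T \<longrightarrow>
        (let P = pair_pmf \<mu> (pair_pmf (pmf_of_set (mat_lists T (rA div K) cA))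
                                       (pmf_of_set (mat_lists T cA (cB div L))));
             X = (\<lambda>(AB :: 'a mat \<times> 'a mat, _ :: 'a mat list \<times> 'a mat list). AB);
             Y = (\<lambda>((A, B), (Rs, Ss)).
                    map (\<lambda>n. (encF K T ap as A Rs (rho n), encG L T bp bs B Ss (rho n)))
                        (sorted_list_of_set W))
         in prob_space.mutual_information (measure_pmf P) 2
              (count_space (X ` space (measure_pmf P))) (count_space (Y ` space (measure_pmf P)))
              X Y = 0))"

end

theory Submission
  imports Defs "HOL-Computational_Algebra.Polynomial"
begin

text \<open>Each entry of F(x) G(x) is a polynomial supported on the degree table D, and since the
  secret terms only reach degrees \<open>\<ge> K L\<close>, its coefficient at \<open>i + K j\<close> is the corresponding
  entry of \<open>A\<^sub>i B\<^sub>j\<close>. As \<open>\<omega>\<close> has order \<open>q > max D\<close>, the values \<open>\<omega>\<^sup>d\<close> (\<open>d \<in> D\<close>) are distinct,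
  so the \<open>N = |D|\<close> evaluations at \<open>1, \<omega>, \<dots>, \<omega>\<^bsup>N-1\<^esup>\<close> determine all coefficients on D
  (a transposed Vandermonde system): this is decodability.

  For privacy, the secret exponents of F form a progression \<open>E + c i\<close>. For fixed A and T fixed
  workers, \<open>(R\<^sub>1, \<dots>, R\<^sub>T) \<mapsto> (F(\<rho>\<^sub>n))\<^sub>n\<close> is then an affine map whose linear part is a Vandermonde
  matrix in the nodes \<open>\<rho>\<^sub>n\<^sup>c\<close>; if these are distinct it is a bijection, so it maps uniform
  randomness to uniform randomness, and likewise for G. Thus the workers' view is independent
  of (A, B). The nodes \<open>\<omega>\<^bsup>(n-1) c\<^esup>\<close> (\<open>n \<le> N \<le> q\<close>) are distinct when c is coprime to q; here
  \<open>c = K\<close> for GASP_small and \<open>c = 1\<close> for GASP_big.\<close>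

lemma primitive_root_of_unity_nonzero:
  assumes "primitive_root_of_unity q (w :: 'a::field)"
  shows "w \<noteq> 0"
  using assms by (auto simp: primitive_root_of_unity_def power_0_left)

lemma primitive_root_of_unity_power_eq_1D:
  assumes "primitive_root_of_unity q (w :: 'a::field)" and "w ^ k = 1"
  shows "q dvd k"
proof -
  have q: "0 < q" "w ^ q = 1" and minimal: "\<And>k. 0 < k \<Longrightarrow> k < q \<Longrightarrow> w ^ k \<noteq> 1"
    using assms(1) unfolding primitive_root_of_unity_def by auto
  have "w ^ (k mod q) = (w ^ q) ^ (k div q) * w ^ (k mod q)"
    using q by simp
  also have "\<dots> = w ^ k"
    by (simp flip: power_mult power_add)
  finally have "w ^ (k mod q) = 1"
    using assms(2) by simp
  then show ?thesis
    using minimal[of "k mod q"] q(1) by (auto simp: dvd_eq_mod_eq_0)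
qed

lemma inj_on_power_primitive_root:
  fixes w :: "'a::field"
  assumes w: "primitive_root_of_unity q w" and "coprime q c"
  shows "inj_on (\<lambda>n. (w ^ n) ^ c) {..<q}"
proof -
  have "a = b" if "a \<le> b" "b < q" "(w ^ a) ^ c = (w ^ b) ^ c" for a b
  proof -
    have "w ^ (c * a) = w ^ (c * b)"
      using that(3) by (simp add: mult.commute flip: power_mult)
    moreover have "c * b = c * a + c * (b - a)"
      using that(1) by (simp add: diff_mult_distrib2)
    then have "w ^ (c * b) = w ^ (c * a) * w ^ (c * (b - a))"
      by (simp only: power_add)
    ultimately have "w ^ (c * (b - a)) = 1"
      using primitive_root_of_unity_nonzero[OF w] by simp
    then have "q dvd c * (b - a)"
      by (rule primitive_root_of_unity_power_eq_1D[OF w])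
    then have "q dvd b - a"
      using \<open>coprime q c\<close> by (simp add: coprime_dvd_mult_right_iff)
    then show "a = b"
      using nat_dvd_not_less[of "b - a" q] that(1,2) by fastforce
  qed
  then show ?thesis
    by (intro inj_onI) (metis lessThan_iff nat_le_linear)
qed

lemma inj_on_shifted_power_primitive_root:
  fixes w :: "'a::field"
  assumes "primitive_root_of_unity q w" "coprime q c" "N \<le> q"
  shows "inj_on (\<lambda>n. (w ^ (n - 1)) ^ c) {1..N}"
proof (rule inj_onI)
  fix n n' assume n: "n \<in> {1..N}" and n': "n' \<in> {1..N}" and eq: "(w ^ (n - 1)) ^ c = (w ^ (n' - 1)) ^ c"
  have "n - 1 = n' - 1"
    by (rule inj_onD[OF inj_on_power_primitive_root[OF assms(1,2)] eq]) (use n n' assms(3) in auto)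
  then show "n = n'"
    using n n' by auto
qed

section \<open>Vandermonde systems\<close>

lemma poly_eq_sum_over_support:
  fixes p :: "'a::comm_semiring_1 poly"
  assumes "finite S" and "\<And>d. d \<notin> S \<Longrightarrow> coeff p d = 0"
  shows "poly p y = (\<Sum>d\<in>S. coeff p d * y ^ d)"
proof -
  have "poly p y = (\<Sum>d\<le>degree p. coeff p d * y ^ d)"
    by (rule poly_altdef)
  also have "\<dots> = (\<Sum>d\<in>S \<union> {..degree p}. coeff p d * y ^ d)"
    by (rule sum.mono_neutral_left) (use assms in \<open>auto simp: coeff_eq_0\<close>)
  also have "\<dots> = (\<Sum>d\<in>S. coeff p d * y ^ d)"
    by (rule sum.mono_neutral_right) (use assms in auto)
  finally show ?thesis .
qed

lemma vandermonde_eq_0: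
  fixes z :: "'b \<Rightarrow> 'a::idom"
  assumes "finite W" "card W = T" "inj_on z W"
    and zero: "\<And>n. n \<in> W \<Longrightarrow> (\<Sum>i<T. v i * z n ^ i) = 0" and "i < T"
  shows "v i = 0"
proof -
  define p where "p = (\<Sum>i<T. monom (v i) i)"
  have coeff_p: "coeff p j = (if j < T then v j else 0)" for j
    unfolding p_def by (simp add: coeff_sum coeff_monom)
  have "p = 0"
  proof (rule ccontr)
    assume "p \<noteq> 0"
    then have "T > 0"
      unfolding p_def by (auto intro: Nat.gr0I)
    moreover have "degree p \<le> T - 1"
      by (rule degree_le) (auto simp: coeff_p)
    moreover have "z ` W \<subseteq> {x. poly p x = 0}"
      using zero by (auto simp: p_def poly_sum poly_monom)
    then have "card (z ` W) \<le> card {x. poly p x = 0}"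
      by (rule card_mono[OF poly_roots_finite[OF \<open>p \<noteq> 0\<close>]])
    then have "T \<le> degree p"
      using card_poly_roots_bound[OF \<open>p \<noteq> 0\<close>] assms(2,3) by (simp add: card_image)
    ultimately show False by linarith
  qed
  then show ?thesis
    using coeff_p[of i] \<open>i < T\<close> by simp
qed

text \<open>The transposed system is solved with the annihilator \<open>\<Prod>\<^bsub>d \<noteq> d\<^sub>0\<^esub> (X - x\<^sub>d)\<close>: taking the
  combination of the equations given by its coefficients isolates \<open>c\<^sub>d\<^sub>0\<close>.\<close>

lemma vandermonde_transpose_eq_0:
  fixes x :: "'b \<Rightarrow> 'a::idom"
  assumes "finite D" "inj_on x D"
    and zero: "\<And>k. k < card D \<Longrightarrow> (\<Sum>d\<in>D. c d * x d ^ k) = 0" and "d0 \<in> D"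
  shows "c d0 = 0"
proof -
  define P where "P = (\<Prod>d\<in>D - {d0}. [:- x d, 1:])"
  have "degree P \<le> (\<Sum>d\<in>D - {d0}. degree [:- x d, 1:])"
    unfolding P_def using degree_prod_sum_le[of "D - {d0}" "\<lambda>d. [:- x d, 1:]"] assms(1)
    by (simp add: comp_def)
  also have "\<dots> = card D - 1"
    using assms(1,4) by (simp add: card_Diff_singleton)
  finally have "degree P < card D"
    using assms(1,4) card_gt_0_iff[of D] by auto
  then have poly_P: "poly P y = (\<Sum>k<card D. coeff P k * y ^ k)" for y
    using poly_eq_sum_over_support[of "{..<card D}" P y] by (auto simp: coeff_eq_0)
  have vanish: "poly P (x d) = 0" if "d \<in> D - {d0}" for d
    unfolding P_def poly_prod using that assms(1) by (auto intro!: prod_zero)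
  have "0 = (\<Sum>k<card D. coeff P k * (\<Sum>d\<in>D. c d * x d ^ k))"
    using zero by simp
  also have "\<dots> = (\<Sum>d\<in>D. c d * poly P (x d))"
    by (simp add: poly_P sum_distrib_left sum.swap[of _ D] mult_ac)
  also have "\<dots> = c d0 * poly P (x d0) + (\<Sum>d\<in>D - {d0}. c d * poly P (x d))"
    by (rule sum.remove[OF assms(1,4)])
  also have "\<dots> = c d0 * poly P (x d0)"
    using vanish by simp
  finally have "c d0 * poly P (x d0) = 0" by simp
  moreover have "poly P (x d0) \<noteq> 0"
    unfolding P_def poly_prod using assms(1,2,4) by (auto simp: inj_on_def)
  ultimately show ?thesis by simp
qed

definition monom_sum :: "(nat \<Rightarrow> 'a::comm_monoid_add) \<Rightarrow> (nat \<Rightarrow> nat) \<Rightarrow> nat \<Rightarrow> 'a poly" where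
  "monom_sum c e n = (\<Sum>i<n. monom (c i) (e i))"

lemma poly_monom_sum:
  fixes c :: "nat \<Rightarrow> 'a::comm_semiring_1"
  shows "poly (monom_sum c e n) x = (\<Sum>i<n. c i * x ^ e i)"
  by (simp add: monom_sum_def poly_sum poly_monom)

lemma coeff_monom_sum_eq_0:
  assumes "d \<notin> e ` {..<n}"
  shows "coeff (monom_sum c e n) d = 0"
  unfolding monom_sum_def coeff_sum using assms by (auto simp: coeff_monom intro!: sum.neutral)

lemma coeff_monom_sum_mult_monom_sum:
  fixes \<alpha> \<beta> :: "nat \<Rightarrow> 'a::comm_semiring_1"
  assumes "i0 < K" "j0 < L"
  shows "coeff (monom_sum \<alpha> (\<lambda>i. i) K * monom_sum \<beta> (\<lambda>j. K * j) L) (i0 + K * j0) = \<alpha> i0 * \<beta> j0"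
proof -
  have digits: "i + K * j = i0 + K * j0 \<longleftrightarrow> i = i0 \<and> j = j0" if "i < K" for i j
  proof
    assume eq: "i + K * j = i0 + K * j0"
    then have "i = i0"
      using mod_mult_self2[of i K j] mod_mult_self2[of i0 K j0] that assms(1) by simp
    with eq assms show "i = i0 \<and> j = j0" by simp
  qed simp
  have "coeff (monom_sum \<alpha> (\<lambda>i. i) K * monom_sum \<beta> (\<lambda>j. K * j) L) (i0 + K * j0)
      = (\<Sum>i<K. \<Sum>j<L. if i + K * j = i0 + K * j0 then \<alpha> i * \<beta> j else 0)"
    by (simp add: monom_sum_def sum_product mult_monom coeff_sum coeff_monom)
  also have "\<dots> = (\<Sum>i<K. if i = i0 then (\<Sum>j<L. if j = j0 then \<alpha> i * \<beta> j else 0) else 0)"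
    by (intro sum.cong refl) (auto simp: digits)
  also have "\<dots> = \<alpha> i0 * \<beta> j0"
    using assms by simp
  finally show ?thesis .
qed

lemma coeff_mult_eq_0_outside_sumset:
  fixes p q :: "'a::comm_semiring_0 poly"
  assumes "\<And>i. coeff p i \<noteq> 0 \<Longrightarrow> i \<in> S" and "\<And>j. coeff q j \<noteq> 0 \<Longrightarrow> j \<in> S'"
    and "d \<notin> {a + b |a b. a \<in> S \<and> b \<in> S'}"
  shows "coeff (p * q) d = 0"
  unfolding coeff_mult
proof (intro sum.neutral ballI)
  fix i assume "i \<in> {..d}"
  show "coeff p i * coeff q (d - i) = 0"
  proof (rule ccontr)
    assume "coeff p i * coeff q (d - i) \<noteq> 0"
    then have "coeff p i \<noteq> 0" "coeff q (d - i) \<noteq> 0"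
      by (metis mult_zero_left, metis mult_zero_right)
    then have "i \<in> S" "d - i \<in> S'"
      using assms(1,2) by blast+
    moreover have "d = i + (d - i)"
      using \<open>i \<in> {..d}\<close> by simp
    ultimately show False
      using assms(3) by blast
  qed
qed

lemma coeff_mult_cong_below:
  assumes "\<And>i. i \<le> d \<Longrightarrow> coeff p i = coeff p' i" and "\<And>i. i \<le> d \<Longrightarrow> coeff q i = coeff q' i"
  shows "coeff (p * q) d = coeff (p' * q') d"
  unfolding coeff_mult using assms by (intro sum.cong) auto

lemma index_mult_mat_sum:
  assumes "A \<in> carrier_mat m n" "B \<in> carrier_mat n p" "i < m" "j < p"
  shows "(A * B) $$ (i, j) = (\<Sum>k<n. A $$ (i, k) * B $$ (k, j))"
proof -
  have "dim_row A = m" "dim_col A = n" "dim_row B = n" "dim_col B = p"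
    using assms(1,2) by auto
  then show ?thesis
    using assms(3,4) by (simp add: scalar_prod_def atLeast0LessThan)
qed

definition enc_poly :: "nat \<Rightarrow> nat \<Rightarrow> (nat \<Rightarrow> nat) \<Rightarrow> (nat \<Rightarrow> nat) \<Rightarrow> (nat \<Rightarrow> 'a mat)
    \<Rightarrow> 'a mat list \<Rightarrow> nat \<times> nat \<Rightarrow> 'a::comm_semiring_1 poly" where
  "enc_poly n T e e' X Rs ij = monom_sum (\<lambda>i. X i $$ ij) e n + monom_sum (\<lambda>i. Rs ! i $$ ij) e' T"

lemma coeff_enc_poly_nonzeroD:
  assumes "coeff (enc_poly n T e e' X Rs ij) d \<noteq> 0"
  shows "d \<in> e ` {..<n} \<union> e' ` {..<T}"
proof (rule ccontr)
  assume "d \<notin> e ` {..<n} \<union> e' ` {..<T}"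
  then show False
    using assms by (simp add: enc_poly_def coeff_monom_sum_eq_0)
qed

lemma index_encF:
  assumes "a < dim_row A div K" "c < dim_col A"
  shows "encF K T ap as A Rs x $$ (a, c) = poly (enc_poly K T ap as (blockA K A) Rs (a, c)) x"
  using assms by (simp add: encF_def enc_poly_def poly_monom_sum)

lemma index_encG:
  assumes "c < dim_row B" "b < dim_col B div L"
  shows "encG L T bp bs B Ss x $$ (c, b) = poly (enc_poly L T bp bs (blockB L B) Ss (c, b)) x"
  using assms by (simp add: encG_def enc_poly_def poly_monom_sum)

lemma coeff_enc_poly_below:
  assumes "\<And>i. i < T \<Longrightarrow> m \<le> e' i" and "d < m"
  shows "coeff (enc_poly n T e e' X Rs ij) d = coeff (monom_sum (\<lambda>i. X i $$ ij) e n) d"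
proof -
  have "d \<notin> e' ` {..<T}"
    using assms by force
  then show ?thesis
    by (simp add: enc_poly_def coeff_monom_sum_eq_0)
qed

definition product_poly :: "nat \<Rightarrow> nat \<Rightarrow> nat \<Rightarrow> (nat \<Rightarrow> nat) \<Rightarrow> (nat \<Rightarrow> nat) \<Rightarrow> (nat \<Rightarrow> nat)
    \<Rightarrow> (nat \<Rightarrow> nat) \<Rightarrow> 'a mat \<Rightarrow> 'a mat \<Rightarrow> 'a mat list \<Rightarrow> 'a mat list \<Rightarrow> nat \<Rightarrow> nat
    \<Rightarrow> 'a::comm_semiring_1 poly" where
  "product_poly K L T ap as bp bs A B Rs Ss a b =
     (\<Sum>c<dim_col A. enc_poly K T ap as (blockA K A) Rs (a, c) * enc_poly L T bp bs (blockB L B) Ss (c, b))"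

lemma index_encF_mult_encG:
  assumes "A \<in> carrier_mat rA cA" "B \<in> carrier_mat cA cB" "a < rA div K" "b < cB div L"
  shows "(encF K T ap as A Rs x * encG L T bp bs B Ss x) $$ (a, b)
       = poly (product_poly K L T ap as bp bs A B Rs Ss a b) x"
proof -
  have F: "encF K T ap as A Rs x \<in> carrier_mat (rA div K) cA"
    and G: "encG L T bp bs B Ss x \<in> carrier_mat cA (cB div L)"
    using assms(1,2) by (auto simp: encF_def encG_def)
  have "(encF K T ap as A Rs x * encG L T bp bs B Ss x) $$ (a, b)
      = (\<Sum>c<cA. encF K T ap as A Rs x $$ (a, c) * encG L T bp bs B Ss x $$ (c, b))"
    by (rule index_mult_mat_sum[OF F G assms(3,4)])
  also have "\<dots> = (\<Sum>c<cA. poly (enc_poly K T ap as (blockA K A) Rs (a, c)) x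
                         * poly (enc_poly L T bp bs (blockB L B) Ss (c, b)) x)"
    using assms by (intro sum.cong refl) (simp add: index_encF index_encG)
  also have "\<dots> = poly (product_poly K L T ap as bp bs A B Rs Ss a b) x"
    using assms(1) by (simp add: product_poly_def poly_sum)
  finally show ?thesis .
qed

lemma coeff_product_poly_eq_0:
  assumes "d \<notin> degree_table K L T ap as bp bs"
  shows "coeff (product_poly K L T ap as bp bs A B Rs Ss a b) d = 0"
proof -
  have "d \<notin> {x + y |x y. x \<in> ap ` {..<K} \<union> as ` {..<T} \<and> y \<in> bp ` {..<L} \<union> bs ` {..<T}}"
    using assms unfolding degree_table_def by blast
  then show ?thesis
    unfolding product_poly_def coeff_sum
    by (intro sum.neutral ballI coeff_mult_eq_0_outside_sumset[OF coeff_enc_poly_nonzeroD coeff_enc_poly_nonzeroD])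
qed

lemma coeff_product_poly_block:
  assumes as: "\<And>i. i < T \<Longrightarrow> K * L \<le> as i" and bs: "\<And>j. j < T \<Longrightarrow> K * L \<le> bs j"
    and "i0 < K" "j0 < L"
    and "A \<in> carrier_mat rA cA" "B \<in> carrier_mat cA cB" "a < rA div K" "b < cB div L"
  shows "coeff (product_poly K L T (\<lambda>i. i) as (\<lambda>j. K * j) bs A B Rs Ss a b) (i0 + K * j0)
       = (blockA K A i0 * blockB L B j0) $$ (a, b)"
proof -
  have "i0 + K * j0 < K * Suc j0"
    using \<open>i0 < K\<close> by simp
  also have "\<dots> \<le> K * L"
    using \<open>j0 < L\<close> by (intro mult_le_mono2) simp
  finally have low: "i0 + K * j0 < K * L" .
  have "coeff (enc_poly K T (\<lambda>i. i) as (blockA K A) Rs (a, c) * enc_poly L T (\<lambda>j. K * j) bs (blockB L B) Ss (c, b))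
          (i0 + K * j0)
      = blockA K A i0 $$ (a, c) * blockB L B j0 $$ (c, b)" for c
  proof -
    have "coeff (enc_poly K T (\<lambda>i. i) as (blockA K A) Rs (a, c) * enc_poly L T (\<lambda>j. K * j) bs (blockB L B) Ss (c, b))
          (i0 + K * j0)
      = coeff (monom_sum (\<lambda>i. blockA K A i $$ (a, c)) (\<lambda>i. i) K
               * monom_sum (\<lambda>j. blockB L B j $$ (c, b)) (\<lambda>j. K * j) L) (i0 + K * j0)"
      by (intro coeff_mult_cong_below coeff_enc_poly_below[OF as] coeff_enc_poly_below[OF bs])
         (use low in linarith)+
    also have "\<dots> = blockA K A i0 $$ (a, c) * blockB L B j0 $$ (c, b)"
      by (rule coeff_monom_sum_mult_monom_sum[OF \<open>i0 < K\<close> \<open>j0 < L\<close>])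
    finally show ?thesis .
  qed
  then have "coeff (product_poly K L T (\<lambda>i. i) as (\<lambda>j. K * j) bs A B Rs Ss a b) (i0 + K * j0)
      = (\<Sum>c<cA. blockA K A i0 $$ (a, c) * blockB L B j0 $$ (c, b))"
    using assms(5) by (simp add: product_poly_def coeff_sum)
  also have "\<dots> = (blockA K A i0 * blockB L B j0) $$ (a, b)"
    by (rule index_mult_mat_sum[symmetric]) (use assms(5-8) in \<open>auto simp: blockA_def blockB_def\<close>)
  finally show ?thesis .
qed

lemma finite_degree_table: "finite (degree_table K L T ap as bp bs)"
proof -
  have "degree_table K L T ap as bp bs \<subseteq>
      (\<lambda>(x, y). x + y) ` ((ap ` {..<K} \<union> as ` {..<T}) \<times> (bp ` {..<L} \<union> bs ` {..<T}))"
    unfolding degree_table_def by auto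
  then show ?thesis
    by (rule finite_subset) auto
qed

section \<open>Decodability\<close>

lemma block_products_determined:
  fixes w :: "'a::field" and K L T :: nat and as bs :: "nat \<Rightarrow> nat"
  defines "D \<equiv> degree_table K L T (\<lambda>i. i) as (\<lambda>j. K * j) bs"
  assumes as: "\<And>i. i < T \<Longrightarrow> K * L \<le> as i" and bs: "\<And>j. j < T \<Longrightarrow> K * L \<le> bs j"
    and inj: "inj_on (\<lambda>d. w ^ d) D"
    and A: "A \<in> carrier_mat rA cA" "A' \<in> carrier_mat rA cA"
    and B: "B \<in> carrier_mat cA cB" "B' \<in> carrier_mat cA cB"
    and same: "\<And>k. k < card D \<Longrightarrow>
       encF K T (\<lambda>i. i) as A Rs (w ^ k) * encG L T (\<lambda>j. K * j) bs B Ss (w ^ k)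
     = encF K T (\<lambda>i. i) as A' Rs' (w ^ k) * encG L T (\<lambda>j. K * j) bs B' Ss' (w ^ k)"
    and "i0 < K" "j0 < L"
  shows "blockA K A i0 * blockB L B j0 = blockA K A' i0 * blockB L B' j0"
proof (rule eq_matI)
  fix a b assume "a < dim_row (blockA K A' i0 * blockB L B' j0)" "b < dim_col (blockA K A' i0 * blockB L B' j0)"
  then have a: "a < rA div K" and b: "b < cB div L"
    using A(2) B(2) by (auto simp: blockA_def blockB_def)
  define p where "p = product_poly K L T (\<lambda>i. i) as (\<lambda>j. K * j) bs A B Rs Ss a b
                    - product_poly K L T (\<lambda>i. i) as (\<lambda>j. K * j) bs A' B' Rs' Ss' a b"
  have finite_D: "finite D"
    unfolding D_def by (rule finite_degree_table)
  have support: "coeff p d = 0" if "d \<notin> D" for d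
    using that by (simp add: p_def D_def coeff_product_poly_eq_0)
  have "(\<Sum>d\<in>D. coeff p d * (w ^ d) ^ k) = 0" if "k < card D" for k
  proof -
    have "(encF K T (\<lambda>i. i) as A Rs (w ^ k) * encG L T (\<lambda>j. K * j) bs B Ss (w ^ k)) $$ (a, b)
        = (encF K T (\<lambda>i. i) as A' Rs' (w ^ k) * encG L T (\<lambda>j. K * j) bs B' Ss' (w ^ k)) $$ (a, b)"
      using same[OF that] by simp
    then have "poly p (w ^ k) = 0"
      by (simp add: p_def index_encF_mult_encG[OF A(1) B(1) a b] index_encF_mult_encG[OF A(2) B(2) a b])
    then show ?thesis
      using poly_eq_sum_over_support[OF finite_D support, where y = "w ^ k"]
      by (simp add: D_def mult.commute flip: power_mult)
  qed
  moreover have "i0 \<in> (\<lambda>i. i) ` {..<K}" "K * j0 \<in> (\<lambda>j. K * j) ` {..<L}"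
    using \<open>i0 < K\<close> \<open>j0 < L\<close> by auto
  then have "i0 + K * j0 \<in> D"
    unfolding D_def degree_table_def by blast
  ultimately have "coeff p (i0 + K * j0) = 0"
    by (rule vandermonde_transpose_eq_0[OF finite_D inj])
  then show "(blockA K A i0 * blockB L B j0) $$ (a, b) = (blockA K A' i0 * blockB L B' j0) $$ (a, b)"
    using coeff_product_poly_block[OF as bs \<open>i0 < K\<close> \<open>j0 < L\<close> A(1) B(1) a b, where Rs = Rs and Ss = Ss]
      coeff_product_poly_block[OF as bs \<open>i0 < K\<close> \<open>j0 < L\<close> A(2) B(2) a b, where Rs = Rs' and Ss = Ss']
    by (simp add: p_def)
qed (use A B in \<open>simp_all add: blockA_def blockB_def\<close>)

lemma decodable_if_block_products_determined:
  assumes "\<And>A B Rs Ss A' B' Rs' Ss' i j. A \<in> carrier_mat rA cA \<Longrightarrow> B \<in> carrier_mat cA cB \<Longrightarrow>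
      A' \<in> carrier_mat rA cA \<Longrightarrow> B' \<in> carrier_mat cA cB \<Longrightarrow>
      map (\<lambda>n. encF K T ap as A Rs (rho n) * encG L T bp bs B Ss (rho n)) [1..<N+1]
    = map (\<lambda>n. encF K T ap as A' Rs' (rho n) * encG L T bp bs B' Ss' (rho n)) [1..<N+1] \<Longrightarrow>
      i < K \<Longrightarrow> j < L \<Longrightarrow> blockA K A i * blockB L B j = blockA K A' i * blockB L B' j"
  shows "decodable K L T ap as bp bs rA cA cB N rho"
proof -
  let ?products = "\<lambda>A B Rs Ss. map (\<lambda>n. encF K T ap as A Rs (rho n) * encG L T bp bs B Ss (rho n)) [1..<N+1]"
  define dec where "dec ys i j = (SOME M. \<exists>A B Rs Ss. A \<in> carrier_mat rA cA \<and> B \<in> carrier_mat cA cB \<and>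
      ?products A B Rs Ss = ys \<and> M = blockA K A i * blockB L B j)" for ys i j
  have "dec (?products A B Rs Ss) i j = blockA K A i * blockB L B j"
    if A: "A \<in> carrier_mat rA cA" and B: "B \<in> carrier_mat cA cB" and "i < K" "j < L" for A B Rs Ss i j
    unfolding dec_def
  proof (rule someI2_ex)
    show "\<exists>M A' B' Rs' Ss'. A' \<in> carrier_mat rA cA \<and> B' \<in> carrier_mat cA cB \<and>
        ?products A' B' Rs' Ss' = ?products A B Rs Ss \<and> M = blockA K A' i * blockB L B' j"
      using A B by blast
  next
    fix M assume "\<exists>A' B' Rs' Ss'. A' \<in> carrier_mat rA cA \<and> B' \<in> carrier_mat cA cB \<and>
        ?products A' B' Rs' Ss' = ?products A B Rs Ss \<and> M = blockA K A' i * blockB L B' j"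
    then obtain A' B' Rs' Ss' where A': "A' \<in> carrier_mat rA cA" and B': "B' \<in> carrier_mat cA cB"
      and same: "?products A' B' Rs' Ss' = ?products A B Rs Ss" and M: "M = blockA K A' i * blockB L B' j"
      by blast
    show "M = blockA K A i * blockB L B j"
      unfolding M by (rule assms[OF A' B' A B same \<open>i < K\<close> \<open>j < L\<close>])
  qed
  then show ?thesis
    unfolding decodable_def by blast
qed

lemma decodable_polynomial_code:
  fixes w :: "'a::field" and K L T :: nat and as bs :: "nat \<Rightarrow> nat"
  defines "D \<equiv> degree_table K L T (\<lambda>i. i) as (\<lambda>j. K * j) bs"
  assumes as: "\<And>i. i < T \<Longrightarrow> K * L \<le> as i" and bs: "\<And>j. j < T \<Longrightarrow> K * L \<le> bs j"
    and inj: "inj_on (\<lambda>d. w ^ d) D"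
  shows "decodable K L T (\<lambda>i. i) as (\<lambda>j. K * j) bs rA cA cB (card D) (\<lambda>n. w ^ (n - 1))"
proof (rule decodable_if_block_products_determined)
  fix A B Rs Ss A' B' Rs' Ss' i j
  assume carriers: "A \<in> carrier_mat rA cA" "B \<in> carrier_mat cA cB" "A' \<in> carrier_mat rA cA" "B' \<in> carrier_mat cA cB"
    and products: "map (\<lambda>n. encF K T (\<lambda>i. i) as A Rs (w ^ (n - 1)) * encG L T (\<lambda>j. K * j) bs B Ss (w ^ (n - 1))) [1..<card D+1]
      = map (\<lambda>n. encF K T (\<lambda>i. i) as A' Rs' (w ^ (n - 1)) * encG L T (\<lambda>j. K * j) bs B' Ss' (w ^ (n - 1))) [1..<card D+1]"
    and "i < K" "j < L"
  have same: "encF K T (\<lambda>i. i) as A Rs (w ^ k) * encG L T (\<lambda>j. K * j) bs B Ss (w ^ k)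
      = encF K T (\<lambda>i. i) as A' Rs' (w ^ k) * encG L T (\<lambda>j. K * j) bs B' Ss' (w ^ k)" if "k < card D" for k
    using arg_cong[OF products, of "\<lambda>xs. xs ! k"] that by (simp del: upt_Suc)
  show "blockA K A i * blockB L B j = blockA K A' i * blockB L B' j"
    by (rule block_products_determined[OF as bs inj[unfolded D_def] carriers(1,3,2,4) same[unfolded D_def]
          \<open>i < K\<close> \<open>j < L\<close>])
qed

section \<open>Privacy\<close>

lemma emeasure_pair_pmf_Times:
  "emeasure (measure_pmf (pair_pmf p q)) (A \<times> B) = emeasure (measure_pmf p) A * emeasure (measure_pmf q) B"
proof -
  have "emeasure (measure_pmf (pair_pmf p q)) (A \<times> B) = (\<integral>\<^sup>+x. indicator (A \<times> B) x \<partial>pair_pmf p q)"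
    by simp
  also have "\<dots> = (\<integral>\<^sup>+a. \<integral>\<^sup>+b. indicator A a * indicator B b \<partial>q \<partial>p)"
    by (simp add: nn_integral_pair_pmf' indicator_times)
  also have "\<dots> = (\<integral>\<^sup>+a. indicator A a * emeasure (measure_pmf q) B \<partial>p)"
    by (simp add: nn_integral_cmult)
  also have "\<dots> = emeasure (measure_pmf p) A * emeasure (measure_pmf q) B"
    by (simp add: nn_integral_multc)
  finally show ?thesis .
qed

lemma pair_measure_distr_eq_distr_pair_pmf:
  fixes P :: "'c pmf"
  assumes X: "X \<in> measurable (measure_pmf P) SX" and Y: "Y \<in> measurable (measure_pmf P) SY"
    and indep: "map_pmf (\<lambda>w. (X w, Y w)) P = pair_pmf (map_pmf X P) (map_pmf Y P)"
  shows "distr (measure_pmf P) SX X \<Otimes>\<^sub>M distr (measure_pmf P) SY Y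
       = distr (measure_pmf P) (SX \<Otimes>\<^sub>M SY) (\<lambda>w. (X w, Y w))"
proof (rule pair_measure_eqI)
  have XY: "(\<lambda>w. (X w, Y w)) \<in> measurable (measure_pmf P) (SX \<Otimes>\<^sub>M SY)"
    by (rule measurable_Pair[OF X Y])
  show "sigma_finite_measure (distr (measure_pmf P) SX X)"
    by (rule prob_space_imp_sigma_finite, rule measure_pmf.prob_space_distr[OF X])
  show "sigma_finite_measure (distr (measure_pmf P) SY Y)"
    by (rule prob_space_imp_sigma_finite, rule measure_pmf.prob_space_distr[OF Y])
  have "sets (distr (measure_pmf P) SX X \<Otimes>\<^sub>M distr (measure_pmf P) SY Y) = sets (SX \<Otimes>\<^sub>M SY)"
    by (rule sets_pair_measure_cong) simp_all
  then show "sets (distr (measure_pmf P) SX X \<Otimes>\<^sub>M distr (measure_pmf P) SY Y)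
           = sets (distr (measure_pmf P) (SX \<Otimes>\<^sub>M SY) (\<lambda>w. (X w, Y w)))"
    by simp
  fix A B assume "A \<in> sets (distr (measure_pmf P) SX X)" "B \<in> sets (distr (measure_pmf P) SY Y)"
  then have A: "A \<in> sets SX" and B: "B \<in> sets SY" by auto
  have "emeasure (distr (measure_pmf P) SX X) A * emeasure (distr (measure_pmf P) SY Y) B
      = emeasure (measure_pmf (map_pmf X P)) A * emeasure (measure_pmf (map_pmf Y P)) B"
    using emeasure_distr[OF X A] emeasure_distr[OF Y B] by simp
  also have "\<dots> = emeasure (measure_pmf (map_pmf (\<lambda>w. (X w, Y w)) P)) (A \<times> B)"
    unfolding indep emeasure_pair_pmf_Times ..
  also have "\<dots> = emeasure (distr (measure_pmf P) (SX \<Otimes>\<^sub>M SY) (\<lambda>w. (X w, Y w))) (A \<times> B)"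
    using emeasure_distr[OF XY pair_measureI[OF A B]] by simp
  finally show "emeasure (distr (measure_pmf P) SX X) A * emeasure (distr (measure_pmf P) SY Y) B
              = emeasure (distr (measure_pmf P) (SX \<Otimes>\<^sub>M SY) (\<lambda>w. (X w, Y w))) (A \<times> B)" .
qed

lemma map_pmf_pair_eq_pair_pmf:
  assumes "\<And>x. x \<in> set_pmf p \<Longrightarrow> map_pmf (g x) q = r"
  shows "map_pmf (\<lambda>(x, y). (x, g x y)) (pair_pmf p q) = pair_pmf p r"
proof -
  have "map_pmf (\<lambda>(x, y). (x, g x y)) (pair_pmf p q) = bind_pmf p (\<lambda>x. bind_pmf q (\<lambda>y. return_pmf (x, g x y)))"
    unfolding pair_pmf_def by (simp add: map_bind_pmf)
  also have "\<dots> = bind_pmf p (\<lambda>x. bind_pmf (map_pmf (g x) q) (\<lambda>y. return_pmf (x, y)))"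
    by (simp add: bind_map_pmf)
  also have "\<dots> = bind_pmf p (\<lambda>x. bind_pmf r (\<lambda>y. return_pmf (x, y)))"
    using assms by (intro bind_pmf_cong) simp_all
  also have "\<dots> = pair_pmf p r"
    unfolding pair_pmf_def ..
  finally show ?thesis .
qed

text \<open>Independence makes the two measures compared by the Kullback-Leibler divergence in the
  definition of mutual information equal.\<close>

lemma mutual_information_pair_pmf_fst_eq_0:
  assumes "\<And>x. x \<in> set_pmf p \<Longrightarrow> map_pmf (\<lambda>y. Y (x, y)) q = r"
  defines "M \<equiv> measure_pmf (pair_pmf p q)"
  shows "prob_space.mutual_information M b (count_space (fst ` space M)) (count_space (Y ` space M)) fst Y = 0"
proof -
  have joint: "map_pmf (\<lambda>w. (fst w, Y w)) (pair_pmf p q) = pair_pmf p r"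
    using map_pmf_pair_eq_pair_pmf[of p "\<lambda>x y. Y (x, y)" q r] assms(1) by (simp add: case_prod_beta')
  have "map_pmf Y (pair_pmf p q) = r"
    using arg_cong[OF joint, of "map_pmf snd"] by (simp add: pmf.map_comp comp_def map_snd_pair_pmf)
  then have "distr M (count_space (fst ` space M)) fst \<Otimes>\<^sub>M distr M (count_space (Y ` space M)) Y
      = distr M (count_space (fst ` space M) \<Otimes>\<^sub>M count_space (Y ` space M)) (\<lambda>w. (fst w, Y w))"
    unfolding M_def by (intro pair_measure_distr_eq_distr_pair_pmf) (simp_all add: joint map_fst_pair_pmf)
  moreover have "sigma_finite_measure
      (distr M (count_space (fst ` space M) \<Otimes>\<^sub>M count_space (Y ` space M)) (\<lambda>w. (fst w, Y w)))"
    unfolding M_def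
    by (rule prob_space_imp_sigma_finite, rule measure_pmf.prob_space_distr, rule measurable_Pair) auto
  ultimately show ?thesis
    unfolding M_def prob_space.mutual_information_def[OF prob_space_measure_pmf]
    by (simp add: sigma_finite_measure.KL_same_eq_0)
qed

lemma map_pmf_of_set_inj_on_self:
  assumes "inj_on f S" "f ` S \<subseteq> S" "finite S" "S \<noteq> {}"
  shows "map_pmf f (pmf_of_set S) = pmf_of_set S"
  using map_pmf_of_set_inj[OF assms(1,4,3)] endo_inj_surj[OF assms(3,2,1)] by simp

lemma finite_carrier_mat: "finite (carrier_mat m n :: 'a::finite mat set)"
proof -
  have "carrier_mat m n \<subseteq> (\<lambda>f. mat m n f) ` ({..<m} \<times> {..<n} \<rightarrow>\<^sub>E (UNIV :: 'a set))"
  proof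
    fix A :: "'a mat" assume A: "A \<in> carrier_mat m n"
    have "A = mat m n (restrict (\<lambda>ij. A $$ ij) ({..<m} \<times> {..<n}))"
      by (rule eq_matI) (use A in auto)
    moreover have "restrict (\<lambda>ij. A $$ ij) ({..<m} \<times> {..<n}) \<in> {..<m} \<times> {..<n} \<rightarrow>\<^sub>E UNIV"
      by simp
    ultimately show "A \<in> (\<lambda>f. mat m n f) ` ({..<m} \<times> {..<n} \<rightarrow>\<^sub>E UNIV)"
      by blast
  qed
  then show ?thesis
    by (rule finite_subset) (intro finite_imageI finite_PiE; simp)
qed

lemma finite_mat_lists: "finite (mat_lists T m n :: 'a::finite mat list set)"
proof -
  have "mat_lists T m n = {xs. set xs \<subseteq> (carrier_mat m n :: 'a mat set) \<and> length xs = T}"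
    unfolding mat_lists_def by auto
  then show ?thesis
    by (simp add: finite_lists_length_eq finite_carrier_mat)
qed

lemma mat_lists_nonempty: "mat_lists T m n \<noteq> ({} :: 'a::zero mat list set)"
proof -
  have "replicate T (0\<^sub>m m n) \<in> (mat_lists T m n :: 'a mat list set)"
    unfolding mat_lists_def by auto
  then show ?thesis by blast
qed

lemma inj_on_masked_evaluations:
  fixes x :: "nat \<Rightarrow> 'a::field"
  assumes W: "finite W" "card W = T"
    and e: "\<And>i. i < T \<Longrightarrow> e i = E + c * i"
    and nonzero: "\<And>n. n \<in> W \<Longrightarrow> x n \<noteq> 0"
    and inj: "inj_on (\<lambda>n. x n ^ c) W"
  shows "inj_on (\<lambda>Rs. map (\<lambda>n. mat m k (\<lambda>ij. base n ij + (\<Sum>i<T. Rs ! i $$ ij * x n ^ e i)))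
                         (sorted_list_of_set W))
           (mat_lists T m k)"
    (is "inj_on (\<lambda>Rs. map (?M Rs) _) _")
proof (rule inj_onI)
  fix Rs Rs' assume Rs: "Rs \<in> mat_lists T m k" and Rs': "Rs' \<in> mat_lists T m k"
    and eq: "map (?M Rs) (sorted_list_of_set W) = map (?M Rs') (sorted_list_of_set W)"
  have same: "?M Rs n = ?M Rs' n" if "n \<in> W" for n
    using eq that unfolding map_eq_conv set_sorted_list_of_set[OF W(1)] by blast
  have entry: "Rs ! i $$ (a, b) = Rs' ! i $$ (a, b)" if "i < T" "a < m" "b < k" for i a b
  proof -
    define v where "v i = Rs ! i $$ (a, b) - Rs' ! i $$ (a, b)" for i
    have "(\<Sum>i<T. v i * (x n ^ c) ^ i) = 0" if "n \<in> W" for n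
    proof -
      have "(\<Sum>i<T. Rs ! i $$ (a, b) * x n ^ e i) = (\<Sum>i<T. Rs' ! i $$ (a, b) * x n ^ e i)"
        using arg_cong[OF same[OF that], of "\<lambda>M. M $$ (a, b)"] \<open>a < m\<close> \<open>b < k\<close> by simp
      then have "(\<Sum>i<T. v i * x n ^ e i) = 0"
        unfolding v_def by (simp add: algebra_simps sum_subtractf)
      moreover have "(\<Sum>i<T. v i * x n ^ e i) = x n ^ E * (\<Sum>i<T. v i * (x n ^ c) ^ i)"
        unfolding sum_distrib_left
        by (intro sum.cong refl) (simp add: e power_add mult_ac flip: power_mult)
      ultimately show ?thesis
        using nonzero[OF that] by simp
    qed
    then have "v i = 0"
      by (rule vandermonde_eq_0[OF W inj _ \<open>i < T\<close>])
    then show ?thesis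
      unfolding v_def by simp
  qed
  have length: "length Rs = T" "length Rs' = T"
    and carrier: "\<And>i. i < T \<Longrightarrow> Rs ! i \<in> carrier_mat m k \<and> Rs' ! i \<in> carrier_mat m k"
    using Rs Rs' unfolding mat_lists_def by (auto dest: nth_mem)
  show "Rs = Rs'"
  proof (rule nth_equalityI)
    fix i assume "i < length Rs"
    then have "i < T"
      using length by simp
    then show "Rs ! i = Rs' ! i"
      by (intro eq_matI) (use carrier[OF \<open>i < T\<close>] entry[OF \<open>i < T\<close>] in auto)
  qed (simp add: length)
qed

lemma masked_evaluations_uniform:
  fixes x :: "nat \<Rightarrow> 'a::{field,finite}"
  assumes "finite W" "card W = T" "\<And>i. i < T \<Longrightarrow> e i = E + c * i"
    "\<And>n. n \<in> W \<Longrightarrow> x n \<noteq> 0" "inj_on (\<lambda>n. x n ^ c) W"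
  shows "map_pmf (\<lambda>Rs. map (\<lambda>n. mat m k (\<lambda>ij. base n ij + (\<Sum>i<T. Rs ! i $$ ij * x n ^ e i)))
                            (sorted_list_of_set W))
           (pmf_of_set (mat_lists T m k))
       = pmf_of_set (mat_lists T m k)"
  by (rule map_pmf_of_set_inj_on_self[OF inj_on_masked_evaluations[OF assms] _ finite_mat_lists
        mat_lists_nonempty])
     (use assms(1,2) in \<open>auto simp: mat_lists_def\<close>)

lemma worker_view_distribution:
  fixes rho :: "nat \<Rightarrow> 'a::{field,finite}" and K L :: nat
  assumes as: "\<And>i. i < T \<Longrightarrow> as i = Ea + ca * i" and bs: "\<And>j. j < T \<Longrightarrow> bs j = Eb + cb * j"
    and W: "finite W" "card W = T" and nonzero: "\<And>n. n \<in> W \<Longrightarrow> rho n \<noteq> 0"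
    and inj_a: "inj_on (\<lambda>n. rho n ^ ca) W" and inj_b: "inj_on (\<lambda>n. rho n ^ cb) W"
    and A: "A \<in> carrier_mat rA cA" and B: "B \<in> carrier_mat cA cB"
  defines "U \<equiv> pair_pmf (pmf_of_set (mat_lists T (rA div K) cA)) (pmf_of_set (mat_lists T cA (cB div L)))"
  shows "map_pmf (\<lambda>(Rs, Ss). map (\<lambda>n. (encF K T ap as A Rs (rho n), encG L T bp bs B Ss (rho n)))
                                (sorted_list_of_set W)) U
       = map_pmf (\<lambda>(u, v). zip u v) U"
proof -
  let ?F = "\<lambda>Rs. map (\<lambda>n. encF K T ap as A Rs (rho n)) (sorted_list_of_set W)"
  let ?G = "\<lambda>Ss. map (\<lambda>n. encG L T bp bs B Ss (rho n)) (sorted_list_of_set W)"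
  have "?F = (\<lambda>Rs. map (\<lambda>n. mat (rA div K) cA (\<lambda>ij. (\<Sum>i<K. blockA K A i $$ ij * rho n ^ ap i)
                                                 + (\<Sum>i<T. Rs ! i $$ ij * rho n ^ as i)))
                       (sorted_list_of_set W))"
    by (simp add: encF_def case_prod_unfold carrier_matD[OF A])
  then have F: "map_pmf ?F (pmf_of_set (mat_lists T (rA div K) cA)) = pmf_of_set (mat_lists T (rA div K) cA)"
    by (simp only: masked_evaluations_uniform[OF W as nonzero inj_a])
  have "?G = (\<lambda>Ss. map (\<lambda>n. mat cA (cB div L) (\<lambda>ij. (\<Sum>j<L. blockB L B j $$ ij * rho n ^ bp j)
                                                   + (\<Sum>j<T. Ss ! j $$ ij * rho n ^ bs j)))
                       (sorted_list_of_set W))"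
    by (simp add: encG_def case_prod_unfold carrier_matD[OF B])
  then have G: "map_pmf ?G (pmf_of_set (mat_lists T cA (cB div L))) = pmf_of_set (mat_lists T cA (cB div L))"
    by (simp only: masked_evaluations_uniform[OF W bs nonzero inj_b])
  have "(\<lambda>(Rs, Ss). map (\<lambda>n. (encF K T ap as A Rs (rho n), encG L T bp bs B Ss (rho n))) (sorted_list_of_set W))
      = (\<lambda>(u, v). zip u v) \<circ> (\<lambda>(Rs, Ss). (?F Rs, ?G Ss))"
    by (intro ext) (simp add: split_beta zip_map_map zip_same_conv_map)
  then have "map_pmf (\<lambda>(Rs, Ss). map (\<lambda>n. (encF K T ap as A Rs (rho n), encG L T bp bs B Ss (rho n)))
                                    (sorted_list_of_set W)) U
      = map_pmf (\<lambda>(u, v). zip u v) (map_pmf (\<lambda>(Rs, Ss). (?F Rs, ?G Ss)) U)"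
    by (simp only: pmf.map_comp)
  also have "map_pmf (\<lambda>(Rs, Ss). (?F Rs, ?G Ss)) U = U"
    unfolding U_def map_pair F G ..
  finally show ?thesis .
qed

lemma t_private_if_secret_degrees_progression:
  fixes rho :: "nat \<Rightarrow> 'a::{field,finite}"
  assumes as: "\<And>i. i < T \<Longrightarrow> as i = Ea + ca * i" and bs: "\<And>j. j < T \<Longrightarrow> bs j = Eb + cb * j"
    and nonzero: "\<And>n. n \<in> {1..N} \<Longrightarrow> rho n \<noteq> 0"
    and inj_a: "inj_on (\<lambda>n. rho n ^ ca) {1..N}" and inj_b: "inj_on (\<lambda>n. rho n ^ cb) {1..N}"
  shows "t_private K L T ap as bp bs rA cA cB N rho"
  unfolding t_private_def Let_def
proof (intro allI impI, goal_cases)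
  case (1 \<mu> W)
  then have supp: "set_pmf \<mu> \<subseteq> carrier_mat rA cA \<times> carrier_mat cA cB" and W: "finite W" "card W = T"
    and W_sub: "W \<subseteq> {1..N}"
    using finite_subset by auto
  define U where "U = pair_pmf (pmf_of_set (mat_lists T (rA div K) cA :: 'a mat list set))
                               (pmf_of_set (mat_lists T cA (cB div L) :: 'a mat list set))"
  have nonzero_W: "\<And>n. n \<in> W \<Longrightarrow> rho n \<noteq> 0"
    using nonzero W_sub by auto
  have fst_eq: "(\<lambda>(AB :: 'a mat \<times> 'a mat, _ :: 'a mat list \<times> 'a mat list). AB) = fst"
    by auto
  show ?case
    unfolding U_def[symmetric] fst_eq
  proof (rule mutual_information_pair_pmf_fst_eq_0[where r = "map_pmf (\<lambda>(u, v). zip u v) U"],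
      goal_cases)
    case (1 AB)
    obtain A B where AB: "AB = (A, B)" by force
    with 1 supp have "A \<in> carrier_mat rA cA" "B \<in> carrier_mat cA cB"
      by auto
    then show ?case
      using worker_view_distribution[OF as bs W nonzero_W inj_on_subset[OF inj_a W_sub]
          inj_on_subset[OF inj_b W_sub]]
      unfolding AB U_def by simp
  qed
qed

lemma gasp_alpha_p_eq: "gasp_alpha_p r K L T = (\<lambda>i. i)"
  by (simp add: fun_eq_iff gasp_alpha_p_def)

lemma gasp_beta_p_eq: "gasp_beta_p r K L T = (\<lambda>j. K * j)"
  by (simp add: fun_eq_iff gasp_beta_p_def)

lemma gasp_table_eq:
  "gasp_table r K L T = degree_table K L T (\<lambda>i. i) (gasp_alpha_s r K L T) (\<lambda>j. K * j) (gasp_beta_s r K L T)"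
  by (simp add: gasp_table_def gasp_alpha_p_eq gasp_beta_p_eq)

lemma gasp_small_alpha_s: "gasp_alpha_s 1 K L T i = K * L + K * i"
  by (simp add: gasp_alpha_s_def GAP_def)

lemma gasp_big_alpha_s:
  assumes "i < T"
  shows "gasp_alpha_s (min K T) K L T i = K * L + 1 * i"
  using assms by (cases "K \<le> T") (simp_all add: gasp_alpha_s_def GAP_def min_def)

lemma gasp_decodable_t_private:
  fixes \<omega> :: "'a::{field,finite}"
  assumes \<omega>: "primitive_root_of_unity q \<omega>" and q: "Max (gasp_table r K L T) < q"
    and alpha_s: "\<And>i. i < T \<Longrightarrow> gasp_alpha_s r K L T i = K * L + c * i" and "coprime q c"
  shows "decodable K L T (gasp_alpha_p r K L T) (gasp_alpha_s r K L T) (gasp_beta_p r K L T)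
           (gasp_beta_s r K L T) rA cA cB (card (gasp_table r K L T)) (\<lambda>n. \<omega> ^ (n - 1))
       \<and> t_private K L T (gasp_alpha_p r K L T) (gasp_alpha_s r K L T) (gasp_beta_p r K L T)
           (gasp_beta_s r K L T) rA cA cB (card (gasp_table r K L T)) (\<lambda>n. \<omega> ^ (n - 1))"
proof
  let ?D = "gasp_table r K L T"
  have D_below_q: "?D \<subseteq> {..<q}"
  proof
    fix d assume "d \<in> ?D"
    then have "d \<le> Max ?D"
      by (simp add: gasp_table_def finite_degree_table)
    then show "d \<in> {..<q}"
      using q by simp
  qed
  then have N: "card ?D \<le> q"
    using card_mono[of "{..<q}" ?D] by simp
  show "decodable K L T (gasp_alpha_p r K L T) (gasp_alpha_s r K L T) (gasp_beta_p r K L T)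
          (gasp_beta_s r K L T) rA cA cB (card ?D) (\<lambda>n. \<omega> ^ (n - 1))"
    unfolding gasp_table_eq gasp_alpha_p_eq gasp_beta_p_eq
  proof (rule decodable_polynomial_code)
    show "inj_on (\<lambda>d. \<omega> ^ d)
        (degree_table K L T (\<lambda>i. i) (gasp_alpha_s r K L T) (\<lambda>j. K * j) (gasp_beta_s r K L T))"
      using inj_on_subset[OF inj_on_power_primitive_root[OF \<omega> coprime_1_right] D_below_q]
      by (simp add: gasp_table_eq)
  qed (simp_all add: alpha_s gasp_beta_s_def)
  show "t_private K L T (gasp_alpha_p r K L T) (gasp_alpha_s r K L T) (gasp_beta_p r K L T)
          (gasp_beta_s r K L T) rA cA cB (card ?D) (\<lambda>n. \<omega> ^ (n - 1))"
  proof (rule t_private_if_secret_degrees_progression[OF alpha_s, where Eb = "K * L" and cb = 1])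
    show "inj_on (\<lambda>n. (\<omega> ^ (n - 1)) ^ c) {1..card ?D}"
      by (rule inj_on_shifted_power_primitive_root[OF \<omega> \<open>coprime q c\<close> N])
    show "inj_on (\<lambda>n. (\<omega> ^ (n - 1)) ^ 1) {1..card ?D}"
      by (rule inj_on_shifted_power_primitive_root[OF \<omega> coprime_1_right N])
  qed (simp_all add: gasp_beta_s_def primitive_root_of_unity_nonzero[OF \<omega>])
qed

theorem corollary1:
  fixes K L T q rA cA cB :: nat and \<omega> :: "'a::{field,finite}"
  assumes "L \<ge> 1" and "K \<ge> L" and "T \<ge> 1"
    and "prime CARD('a)"
    and "q > 0" and "primitive_root_of_unity q \<omega>"
    and "K dvd rA" and "L dvd cB"
  shows
    "(q > Max (gasp_table 1 K L T) \<and> coprime q K \<longrightarrow>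
       (let N = card (gasp_table 1 K L T); rho = (\<lambda>n. \<omega> ^ (n - 1)) in
          decodable K L T (gasp_alpha_p 1 K L T) (gasp_alpha_s 1 K L T)
                          (gasp_beta_p 1 K L T) (gasp_beta_s 1 K L T) rA cA cB N rho
        \<and> t_private K L T (gasp_alpha_p 1 K L T) (gasp_alpha_s 1 K L T)
                          (gasp_beta_p 1 K L T) (gasp_beta_s 1 K L T) rA cA cB N rho))
   \<and> (q > Max (gasp_table (min K T) K L T) \<longrightarrow>
       (let r = min K T; N = card (gasp_table r K L T); rho = (\<lambda>n. \<omega> ^ (n - 1)) in
          decodable K L T (gasp_alpha_p r K L T) (gasp_alpha_s r K L T)
                          (gasp_beta_p r K L T) (gasp_beta_s r K L T) rA cA cB N rho
        \<and> t_private K L T (gasp_alpha_p r K L T) (gasp_alpha_s r K L T)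
                          (gasp_beta_p r K L T) (gasp_beta_s r K L T) rA cA cB N rho))"
  unfolding Let_def
  using gasp_decodable_t_private[OF assms(6) _ gasp_small_alpha_s]
    gasp_decodable_t_private[OF assms(6) _ gasp_big_alpha_s coprime_1_right]
  by blast

end
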